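(* Under the setting below, the polygon-constrained half-$\Theta_6$-graph $G_\infty$ is plane (no two of its edges properly cross).
   Context: Setting: $V$ is a finite set of points (vertices) in the plane and $S$ a finite set of simple polygonal obstacles, pairwise non-intersecting, all of whose corners lie in $V$; each vertex of $V$ is a corner of at most one obstacle and occurs at most once on its boundary ($V$ may contain vertices that are not obstacle corners). General position: no three vertices are collinear and no two vertices lie on a line parallel to a boundary ray of one of the cones defined below. Two points $p,q$ are visible if segment $pq$ does not properly intersect any obstacle (it may touch obstacles at vertices or run along their boundaries, but may not meet an obstacle's interior); $pq$ is then a visibility edge. Cones: around each vertex $u$ the plane is partitioned into six cones of angle $\pi/3$ with apex $u$; the cone whose bisector is the upward vertical ray from $u$ is $C_0^u$, and in counterclockwise order the cones are $C_0^u,\overline{C_2^u},C_1^u,\overline{C_0^u},C_2^u,\overline{C_1^u}$. Cones $C_i^u$ are positive, $\overline{C_i^u}$ negative; indices are taken mod 3. If the obstacle having $u$ as a corner splits a cone of $u$ so that there are vertices visible from $u$ on both sides of the obstacle within that cone, the cone is regarded as two subcones (the parts on either side of the obstacle); otherwise the cone is a single subcone. $G_\infty$: for every vertex $u$ and every positive subcone of $u$, add an (undirected) edge from $u$ to the vertex visible from $u$ in that subcone whose orthogonal projection onto the bisector of the cone is closest to $u$ (if such a vertex exists). Edges are weighted by Euclidean length. *)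

theory Defs
  imports "HOL-Analysis.Analysis"
begin

type_synonym pt = "real \<times> real"

definition poly_edge :: "pt list \<Rightarrow> nat \<Rightarrow> pt set" where
  "poly_edge P i = closed_segment (P ! i) (P ! ((i + 1) mod length P))"

definition poly_boundary :: "pt list \<Rightarrow> pt set" where
  "poly_boundary P = (\<Union>i<length P. poly_edge P i)"

definition simple_polygon :: "pt list \<Rightarrow> bool" where
  "simple_polygon P \<longleftrightarrow> length P \<ge> 3 \<and> distinct P \<and>
     (\<forall>i<length P. \<forall>j<length P. i \<noteq> j \<longrightarrow>
        (if j = (i + 1) mod length P then poly_edge P i \<inter> poly_edge P j = {P ! j}
         else if i = (j + 1) mod length P then poly_edge P i \<inter> poly_edge P j = {P ! i}
         else poly_edge P i \<inter> poly_edge P j = {}))"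

definition poly_interior :: "pt list \<Rightarrow> pt set" where
  "poly_interior P = inside (poly_boundary P)"

definition visible :: "pt list set \<Rightarrow> pt \<Rightarrow> pt \<Rightarrow> bool" where
  "visible S p q \<longleftrightarrow> (\<forall>P\<in>S. closed_segment p q \<inter> poly_interior P = {})"

definition dir :: "real \<Rightarrow> pt" where
  "dir \<theta> = (cos \<theta>, sin \<theta>)"

definition dotp :: "pt \<Rightarrow> pt \<Rightarrow> real" where
  "dotp a b = fst a * fst b + snd a * snd b"

text \<open>Bisector angle of the positive cone C_i (i = 0,1,2): C_0 points upward,
  and C_1, C_2 follow at angles 2pi/3 counterclockwise.\<close>
definition bisector :: "nat \<Rightarrow> real" where
  "bisector i = pi / 2 + real i * (2 * pi / 3)"

definition proj :: "pt \<Rightarrow> nat \<Rightarrow> pt \<Rightarrow> real" where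
  "proj u i v = dotp (v - u) (dir (bisector i))"

definition in_pcone :: "pt \<Rightarrow> nat \<Rightarrow> pt \<Rightarrow> bool" where
  "in_pcone u i v \<longleftrightarrow> v \<noteq> u \<and> proj u i v \<ge> cos (pi / 6) * dist v u"

definition sector :: "pt \<Rightarrow> pt \<Rightarrow> pt \<Rightarrow> pt set" where
  "sector u v w = {u + s *\<^sub>R (v - u) + t *\<^sub>R (w - u) | s t. s \<ge> 0 \<and> t \<ge> 0}"

text \<open>v and w (seen from u inside a common cone) lie in different subcones:
  an obstacle having u as a corner lies angularly between them at u, i.e. the
  angular sector between rays uv and uw meets the obstacle's interior
  arbitrarily close to u.\<close>
definition separated :: "pt list set \<Rightarrow> pt \<Rightarrow> pt \<Rightarrow> pt \<Rightarrow> bool" where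
  "separated S u v w \<longleftrightarrow>
     (\<exists>P\<in>S. \<forall>e>0. sector u v w \<inter> ball u e \<inter> poly_interior P \<noteq> {})"

definition half_theta_choice :: "pt set \<Rightarrow> pt list set \<Rightarrow> pt \<Rightarrow> pt \<Rightarrow> bool" where
  "half_theta_choice V S u v \<longleftrightarrow> u \<in> V \<and> v \<in> V \<and>
     (\<exists>i<3. in_pcone u i v \<and> visible S u v \<and>
        (\<forall>w\<in>V. in_pcone u i w \<longrightarrow> visible S u w \<longrightarrow> \<not> separated S u v w \<longrightarrow>
            proj u i v \<le> proj u i w))"

definition G_inf_edge :: "pt set \<Rightarrow> pt list set \<Rightarrow> pt \<Rightarrow> pt \<Rightarrow> bool" where
  "G_inf_edge V S a b \<longleftrightarrow> half_theta_choice V S a b \<or> half_theta_choice V S b a"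

definition plane_graph :: "(pt \<Rightarrow> pt \<Rightarrow> bool) \<Rightarrow> bool" where
  "plane_graph E \<longleftrightarrow> (\<forall>a b c d. E a b \<longrightarrow> E c d \<longrightarrow> {a, b} \<noteq> {c, d} \<longrightarrow>
      open_segment a b \<inter> open_segment c d = {})"

definition obstacle_setting :: "pt set \<Rightarrow> pt list set \<Rightarrow> bool" where
  "obstacle_setting V S \<longleftrightarrow> finite V \<and> finite S \<and>
     (\<forall>P\<in>S. simple_polygon P \<and> set P \<subseteq> V) \<and>
     (\<forall>P\<in>S. \<forall>Q\<in>S. P \<noteq> Q \<longrightarrow>
        set P \<inter> set Q = {} \<and>
        (poly_boundary P \<union> poly_interior P) \<inter> (poly_boundary Q \<union> poly_interior Q) = {})"

definition general_position :: "pt set \<Rightarrow> bool" where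
  "general_position V \<longleftrightarrow>
     (\<forall>a\<in>V. \<forall>b\<in>V. \<forall>c\<in>V. a \<noteq> b \<and> a \<noteq> c \<and> b \<noteq> c \<longrightarrow> \<not> collinear {a, b, c}) \<and>
     (\<forall>a\<in>V. \<forall>b\<in>V. a \<noteq> b \<longrightarrow>
        (\<forall>k::nat<3. \<forall>c::real. b - a \<noteq> c *\<^sub>R dir (real k * pi / 3)))"

end

theory Submission
  imports Defs
begin

(*
  Suppose that the edges ab and cd of G_infinity cross at p, where b is the vertex chosen by a
  in its positive cone C_i. Comparing the three cone coordinates (projections onto the cone
  bisectors) of the four endpoints shows that one of the two segments, say ab, has an endpoint w
  of the other one in its canonical triangle; then the whole triangle a p w lies in C_i and
  projects below b. Among the vertices of this triangle other than a that lie in no obstacle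
  (w is one of them), let z be the one for which the angle between ab and az at a is smallest.
  The wedge of the triangle a p w between the rays ab and az meets no obstacle: the only
  vertices in it are a and z, and no obstacle edge can leave it through ab or pw, which are
  visibility segments, so the interior of the wedge avoids all obstacle boundaries, while the
  wedge contains p, which lies in no obstacle. Hence z is visible from a, lies in the same
  subcone as b and has a smaller projection than b, contradicting the choice of b.
  The one topological input is the Jordan curve theorem for the obstacle boundaries: every
  boundary point is a limit of interior points, so a segment that crosses an obstacle edge
  transversally enters the obstacle.
*)

section \<open>Simple polygons\<close>

lemma simple_polygon_nth_eq_iff:
  assumes "simple_polygon P" "i < length P" "j < length P"
  shows "P ! i = P ! j \<longleftrightarrow> i = j"
  using assms unfolding simple_polygon_def by (simp add: nth_eq_iff_index_eq)

lemma simple_polygon_edges_inter: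
  assumes "simple_polygon P" "i < length P" "j < length P" "i \<noteq> j"
  shows "poly_edge P i \<inter> poly_edge P j \<subseteq>
           {P ! i, P ! (Suc i mod length P)} \<inter> {P ! j, P ! (Suc j mod length P)}"
proof -
  have "if j = (i + 1) mod length P then poly_edge P i \<inter> poly_edge P j = {P ! j}
        else if i = (j + 1) mod length P then poly_edge P i \<inter> poly_edge P j = {P ! i}
        else poly_edge P i \<inter> poly_edge P j = {}"
    using assms unfolding simple_polygon_def by blast
  then show ?thesis by (auto split: if_splits)
qed

lemma poly_edge_subset_boundary: "k < length P \<Longrightarrow> poly_edge P k \<subseteq> poly_boundary P"
  unfolding poly_boundary_def by blast

lemma closed_poly_boundary: "closed (poly_boundary P)"
  unfolding poly_boundary_def poly_edge_def by (intro closed_UN) auto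

lemma open_poly_interior: "open (poly_interior P)"
  unfolding poly_interior_def by (rule open_inside[OF closed_poly_boundary])

lemma poly_boundary_disjoint_interior: "poly_boundary P \<inter> poly_interior P = {}"
  unfolding poly_interior_def inside_def by auto

lemma corner_in_poly_boundary: "c \<in> set P \<Longrightarrow> c \<in> poly_boundary P"
  unfolding poly_boundary_def poly_edge_def by (force simp: in_set_conv_nth)

fun polygon_chain :: "pt list \<Rightarrow> nat \<Rightarrow> real \<Rightarrow> pt" where
  "polygon_chain P 0 = linepath (P ! 0) (P ! 1)"
| "polygon_chain P (Suc k) = polygon_chain P k +++ linepath (P ! Suc k) (P ! Suc (Suc k))"

lemma arc_polygon_chain:
  assumes P: "simple_polygon P" and k: "k + 2 \<le> length P"
  shows "arc (polygon_chain P k) \<and> pathstart (polygon_chain P k) = P ! 0 \<and>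
    pathfinish (polygon_chain P k) = P ! Suc k \<and>
    path_image (polygon_chain P k) = (\<Union>m\<le>k. poly_edge P m)"
  using k
proof (induction k)
  case 0
  then have "1 < length P" by simp
  then have "P ! 0 \<noteq> P ! 1"
    by (subst simple_polygon_nth_eq_iff[OF P]) auto
  with 0 show ?case by (simp add: poly_edge_def)
next
  case (Suc k)
  let ?e = "linepath (P ! Suc k) (P ! Suc (Suc k))"
  have IH: "arc (polygon_chain P k)" "pathfinish (polygon_chain P k) = P ! Suc k"
    "path_image (polygon_chain P k) = (\<Union>m\<le>k. poly_edge P m)"
    "pathstart (polygon_chain P k) = P ! 0"
    using Suc by auto
  have edge: "poly_edge P (Suc k) = path_image ?e"
    using Suc.prems by (simp add: poly_edge_def)
  have "P ! Suc k \<noteq> P ! Suc (Suc k)"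
    using simple_polygon_nth_eq_iff[OF P] Suc.prems by simp
  then have "arc ?e" by simp
  moreover have "path_image (polygon_chain P k) \<inter> path_image ?e \<subseteq> {P ! Suc k}"
  proof -
    have "poly_edge P m \<inter> poly_edge P (Suc k) \<subseteq> {P ! Suc k}" if "m \<le> k" for m
    proof -
      have "poly_edge P m \<inter> poly_edge P (Suc k) \<subseteq> {P ! m, P ! Suc m} \<inter> {P ! Suc k, P ! Suc (Suc k)}"
        using simple_polygon_edges_inter[OF P, of m "Suc k"] that Suc.prems by simp
      moreover have "P ! m \<noteq> P ! Suc k" "P ! m \<noteq> P ! Suc (Suc k)" "P ! Suc m \<noteq> P ! Suc (Suc k)"
        using simple_polygon_nth_eq_iff[OF P] that Suc.prems by simp_all
      ultimately show ?thesis by blast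
    qed
    then show ?thesis using IH(3) edge by blast
  qed
  ultimately have "arc (polygon_chain P k +++ ?e)"
    using IH(1,2) by (intro arc_join) auto
  then show ?case
    using IH edge by (simp add: path_image_join atMost_Suc Un_commute)
qed

definition polygon_loop :: "pt list \<Rightarrow> real \<Rightarrow> pt" where
  "polygon_loop P = polygon_chain P (length P - 2) +++ linepath (P ! (length P - 1)) (P ! 0)"

lemma simple_closed_polygon_loop:
  assumes P: "simple_polygon P"
  shows "simple_path (polygon_loop P)" "pathfinish (polygon_loop P) = pathstart (polygon_loop P)"
    "path_image (polygon_loop P) = poly_boundary P"
proof -
  let ?n = "length P"
  let ?c = "polygon_chain P (?n - 2)" and ?e = "linepath (P ! (?n - 1)) (P ! 0)"
  have n: "?n \<ge> 3" using P by (simp add: simple_polygon_def)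
  then have c: "arc ?c" "pathstart ?c = P ! 0" "pathfinish ?c = P ! (?n - 1)"
    "path_image ?c = (\<Union>m\<le>?n - 2. poly_edge P m)"
    using arc_polygon_chain[OF P, of "?n - 2"] by (auto simp: Suc_diff_Suc numeral_2_eq_2)
  have n1: "Suc (?n - 1) = ?n" using n by simp
  then have edge: "poly_edge P (?n - 1) = path_image ?e"
    by (simp add: poly_edge_def)
  have "P ! (?n - 1) \<noteq> P ! 0"
    using n by (subst simple_polygon_nth_eq_iff[OF P]) auto
  then have "arc ?e" by simp
  moreover have "path_image ?c \<inter> path_image ?e \<subseteq> {pathstart ?e, pathfinish ?e}"
  proof -
    have "poly_edge P m \<inter> poly_edge P (?n - 1) \<subseteq> {P ! (?n - 1), P ! 0}" if "m \<le> ?n - 2" for m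
    proof -
      have "?n - 1 < ?n" "m < ?n" "?n - 1 \<noteq> m" using that n by auto
      from simple_polygon_edges_inter[OF P this] show ?thesis
        unfolding n1 mod_self by blast
    qed
    then show ?thesis using c(4) edge by auto
  qed
  ultimately show "simple_path (polygon_loop P)"
    unfolding polygon_loop_def using c by (intro simple_path_join_loop) auto
  show "pathfinish (polygon_loop P) = pathstart (polygon_loop P)"
    unfolding polygon_loop_def using c by simp
  have "{..<?n} = insert (?n - 1) {..?n - 2}" using n by auto
  then have boundary: "poly_boundary P = path_image ?e \<union> path_image ?c"
    unfolding poly_boundary_def c(4) using edge by simp
  have "path_image (polygon_loop P) = path_image ?c \<union> path_image ?e"
    unfolding polygon_loop_def using c(3) by (intro path_image_join) simp
  then show "path_image (polygon_loop P) = poly_boundary P"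
    unfolding boundary by (simp only: Un_commute)
qed

lemma poly_boundary_subset_closure_interior:
  assumes P: "simple_polygon P"
  shows "poly_boundary P \<subseteq> closure (poly_interior P)"
proof -
  let ?B = "poly_boundary P"
  have "?B homeomorphic sphere (0::complex) 1"
    using homeomorphic_simple_path_image_circle[OF simple_closed_polygon_loop(1,2)[OF P], of 1 0]
      simple_closed_polygon_loop(3)[OF P] by simp
  moreover have "sphere (0::complex) 1 homeomorphic sphere (0::pt) 1"
    by (rule homeomorphic_spheres_gen) auto
  ultimately have hom: "?B homeomorphic sphere (0::pt) 1"
    using homeomorphic_trans by blast
  then have "compact ?B"
    using homeomorphic_compactness compact_sphere by blast
  then have "bounded (- (- ?B))"
    using compact_imp_bounded by simp
  moreover have "\<not> connected (- ?B)"
    using Jordan_Brouwer_separation[OF hom] by simp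
  moreover have "2 \<le> DIM(pt)" by simp
  ultimately obtain C where C: "C \<in> components (- ?B)" "bounded C"
    by (metis cobounded_has_bounded_component)
  have "C \<subseteq> inside ?B"
  proof
    fix x assume x: "x \<in> C"
    from C(1) obtain y where "C = connected_component_set (- ?B) y"
      by (auto simp: components_iff)
    with x have "C = connected_component_set (- ?B) x" "x \<notin> ?B"
      using connected_component_eq connected_component_subset by blast+
    then show "x \<in> inside ?B" using C(2) by (simp add: inside_def)
  qed
  then have "closure C \<subseteq> closure (inside ?B)"
    by (rule closure_mono)
  moreover have "frontier C = ?B"
    using Jordan_Brouwer_frontier[OF hom C(1)] by simp
  ultimately show ?thesis
    unfolding poly_interior_def frontier_def by blast
qed

section \<open>Cross products and affine functions\<close>

definition cross :: "pt \<Rightarrow> pt \<Rightarrow> real" where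
  "cross x y = fst x * snd y - snd x * fst y"

lemma cross_scaleR_left [simp]: "cross (c *\<^sub>R x) y = c * cross x y"
  and cross_scaleR_right [simp]: "cross x (c *\<^sub>R y) = c * cross x y"
  by (simp_all add: cross_def algebra_simps)

lemma cross_add_left [simp]: "cross (x + y) z = cross x z + cross y z"
  and cross_add_right [simp]: "cross x (y + z) = cross x y + cross x z"
  by (simp_all add: cross_def algebra_simps)

lemma cross_self [simp]: "cross x x = 0"
  by (simp add: cross_def)

lemma cross_antisym: "cross y x = - cross x y"
  by (simp add: cross_def)

lemma cross_closed_segment: "x \<in> closed_segment a b \<Longrightarrow> cross (b - a) (x - a) = 0"
proof -
  assume "x \<in> closed_segment a b"
  then obtain t where "x = (1 - t) *\<^sub>R a + t *\<^sub>R b"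
    unfolding in_segment by blast
  then have "x - a = t *\<^sub>R (b - a)"
    by (simp add: algebra_simps)
  then show ?thesis
    by simp
qed

lemma cross_eq_0_imp_parallel:
  assumes "cross d e = 0" "d \<noteq> 0"
  obtains u where "e = u *\<^sub>R d"
proof (cases "fst d = 0")
  case True
  then have "snd d \<noteq> 0" using assms(2) by (simp add: prod_eq_iff)
  then have "e = (snd e / snd d) *\<^sub>R d"
    using assms(1) True by (simp add: cross_def prod_eq_iff field_simps)
  then show ?thesis by (rule that)
next
  case False
  then have "e = (fst e / fst d) *\<^sub>R d"
    using assms(1) by (simp add: cross_def prod_eq_iff field_simps)
  then show ?thesis by (rule that)
qed

lemma collinear_if_cross_eq_0:
  assumes "cross (b - a) (c - a) = 0"
  shows "collinear {a, b, c}"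
proof (cases "a = b")
  case False
  then obtain u where "c - a = u *\<^sub>R (b - a)"
    using cross_eq_0_imp_parallel[OF assms] by auto
  then have "c = u *\<^sub>R b + (1 - u) *\<^sub>R a" by (simp add: algebra_simps)
  then have "collinear {b, c, a}" using collinear_3_expand by blast
  then show ?thesis by (simp add: insert_commute)
qed (simp add: collinear_2)

lemma abs_cross_le: "\<bar>cross x y\<bar> \<le> 2 * norm x * norm y"
proof -
  have coords: "\<bar>fst v\<bar> \<le> norm v" "\<bar>snd v\<bar> \<le> norm v" for v :: pt
    using norm_fst_le[of "fst v" "snd v"] norm_snd_le[of "snd v" "fst v"] by simp_all
  have "\<bar>cross x y\<bar> \<le> \<bar>fst x\<bar> * \<bar>snd y\<bar> + \<bar>snd x\<bar> * \<bar>fst y\<bar>"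
    unfolding cross_def by (metis abs_mult abs_triangle_ineq4)
  also have "\<dots> \<le> norm x * norm y + norm x * norm y"
    by (intro add_mono mult_mono) (auto simp: coords)
  finally show ?thesis by simp
qed

definition affine_fn :: "(pt \<Rightarrow> real) \<Rightarrow> bool" where
  "affine_fn F \<longleftrightarrow> (\<exists>k0 k1 k2. \<forall>q. F q = k0 + k1 * fst q + k2 * snd q)"

lemma affine_fnE:
  assumes "affine_fn F"
  obtains k0 k1 k2 where "\<And>q. F q = k0 + k1 * fst q + k2 * snd q"
  using assms unfolding affine_fn_def by blast

lemma affine_fn_combination:
  "affine_fn F \<Longrightarrow> F (a + s *\<^sub>R (x - a) + t *\<^sub>R (y - a)) = F a + s * (F x - F a) + t * (F y - F a)"
  by (elim affine_fnE) (simp add: algebra_simps)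

lemma affine_fn_segment:
  "affine_fn F \<Longrightarrow> F ((1 - u) *\<^sub>R x + u *\<^sub>R y) = (1 - u) * F x + u * F y"
  by (elim affine_fnE) (simp add: algebra_simps)

lemma affine_fn_const: "affine_fn (\<lambda>q. c)"
  unfolding affine_fn_def by (intro exI[of _ c] exI[of _ 0]) simp

lemma affine_fn_diff:
  assumes "affine_fn F" "affine_fn H"
  shows "affine_fn (\<lambda>q. F q - H q)"
proof -
  obtain a0 a1 a2 where "\<And>q. F q = a0 + a1 * fst q + a2 * snd q"
    using assms(1) unfolding affine_fn_def by blast
  moreover obtain b0 b1 b2 where "\<And>q. H q = b0 + b1 * fst q + b2 * snd q"
    using assms(2) unfolding affine_fn_def by blast
  ultimately show ?thesis
    unfolding affine_fn_def
    by (intro exI[of _ "a0 - b0"] exI[of _ "a1 - b1"] exI[of _ "a2 - b2"]) (simp add: algebra_simps)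
qed

lemma affine_fn_mult:
  assumes "affine_fn F"
  shows "affine_fn (\<lambda>q. c * F q)"
proof -
  obtain a0 a1 a2 where "\<And>q. F q = a0 + a1 * fst q + a2 * snd q"
    using assms unfolding affine_fn_def by blast
  then show ?thesis
    unfolding affine_fn_def
    by (intro exI[of _ "c * a0"] exI[of _ "c * a1"] exI[of _ "c * a2"]) (simp add: algebra_simps)
qed

lemma affine_fn_divide: "affine_fn F \<Longrightarrow> affine_fn (\<lambda>q. F q / c)"
  using affine_fn_mult[of F "1 / c"] by simp

lemma affine_fn_cross_left: "affine_fn (\<lambda>q. cross (q - a) v)"
  unfolding affine_fn_def cross_def
  by (intro exI[of _ "snd a * fst v - fst a * snd v"] exI[of _ "snd v"] exI[of _ "- fst v"])
    (simp add: algebra_simps)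

lemma affine_fn_cross_right: "affine_fn (\<lambda>q. cross v (q - a))"
  unfolding affine_fn_def cross_def
  by (intro exI[of _ "fst a * snd v - snd a * fst v"] exI[of _ "- snd v"] exI[of _ "fst v"])
    (simp add: algebra_simps)

lemma convex_affine_fn_pos:
  assumes "affine_fn F"
  shows "convex {x. 0 < F x}"
proof (rule convexI)
  fix x y :: pt and u v :: real
  assume xy: "x \<in> {x. 0 < F x}" "y \<in> {x. 0 < F x}" and uv: "0 \<le> u" "0 \<le> v" "u + v = 1"
  have "u = 1 - v"
    using uv(3) by simp
  then have "F (u *\<^sub>R x + v *\<^sub>R y) = u * F x + v * F y"
    using affine_fn_segment[OF assms, of v x y] by simp
  moreover have "0 < u * F x + v * F y"
    using xy uv by (cases "u = 0") (auto intro: add_pos_nonneg)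
  ultimately show "u *\<^sub>R x + v *\<^sub>R y \<in> {x. 0 < F x}" by simp
qed

lemma affine_fn_pos_at_segment_end:
  assumes "affine_fn F" "r \<in> closed_segment s1 s2" "F r = 0" "F s1 \<noteq> 0" "F s2 \<noteq> 0"
  obtains s where "s \<in> {s1, s2}" "0 < F s"
proof -
  obtain u where u: "0 \<le> u" "u \<le> 1" "r = (1 - u) *\<^sub>R s1 + u *\<^sub>R s2"
    using assms(2) unfolding in_segment by blast
  have "(1 - u) * F s1 + u * F s2 = 0"
    using affine_fn_segment[OF assms(1)] u(3) assms(3) by simp
  then have "0 < F s1 \<or> 0 < F s2"
    using u assms(4,5) by (smt (verit) mult_nonneg_nonpos mult_pos_neg)
  then show ?thesis using that by blast
qed

lemma affine_fn_segment_between: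
  assumes "affine_fn F" "x \<in> closed_segment a b"
  shows "min (F a) (F b) \<le> F x" "F x \<le> max (F a) (F b)"
proof -
  obtain u where u: "0 \<le> u" "u \<le> 1" "x = (1 - u) *\<^sub>R a + u *\<^sub>R b"
    using assms(2) unfolding in_segment by blast
  then have Fx: "F x = (1 - u) * F a + u * F b"
    using affine_fn_segment[OF assms(1)] by simp
  have "(1 - u) * min (F a) (F b) + u * min (F a) (F b) \<le> (1 - u) * F a + u * F b"
    using u by (intro add_mono mult_left_mono) auto
  then show "min (F a) (F b) \<le> F x"
    unfolding Fx by (simp add: algebra_simps)
  show "F x \<le> max (F a) (F b)"
    unfolding Fx using u by (intro convex_bound_le) auto
qed

lemma barycentric_le:
  fixes A B C m s t :: real
  assumes "0 \<le> s" "0 \<le> t" "s + t \<le> 1" "A \<le> m" "B \<le> m" "C \<le> m"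
  shows "A + s * (B - A) + t * (C - A) \<le> m"
proof -
  have "(1 - s - t) * A + s * B + t * C \<le> (1 - s - t) * m + s * m + t * m"
    using assms by (intro add_mono mult_left_mono) auto
  then show ?thesis
    by (simp add: algebra_simps)
qed

lemma barycentric_less:
  fixes A B C m s t :: real
  assumes "0 \<le> s" "0 \<le> t" "s + t \<le> 1" "A < m" "B < m" "C < m"
  shows "A + s * (B - A) + t * (C - A) < m"
proof -
  have "A + s * (B - A) + t * (C - A) \<le> max A (max B C)"
    using assms(1-3) by (intro barycentric_le) auto
  also have "\<dots> < m"
    using assms(4-6) by simp
  finally show ?thesis .
qed

lemma affine_fn_zero_on_segment:
  assumes "affine_fn F" "F x = 0" "F y = 0" "q \<in> closed_segment x y"
  shows "F q = 0"
  using affine_fn_segment_between[OF assms(1,4)] assms(2,3) by simp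

lemma affine_fn_pos_open_segment:
  assumes "affine_fn F" "0 \<le> F x" "0 < F y" "q \<in> open_segment x y"
  shows "0 < F q"
proof -
  obtain u where "0 < u" "u < 1" "q = (1 - u) *\<^sub>R x + u *\<^sub>R y"
    using assms(4) unfolding in_segment by blast
  then show ?thesis
    using affine_fn_segment[OF assms(1), of u x y] assms(2,3)
    by (simp add: add_nonneg_pos)
qed

lemma affine_fn_nonpos_before_zero:
  assumes "affine_fn F" "y \<in> closed_segment x r" "y \<noteq> r" "F y = 0" "0 < F r"
  shows "F x \<le> 0"
proof -
  obtain u where u: "0 \<le> u" "u \<le> 1" "y = (1 - u) *\<^sub>R x + u *\<^sub>R r"
    using assms(2) unfolding in_segment by blast
  then have "u \<noteq> 1"
    using assms(3) by auto
  have "(1 - u) * F x = - (u * F r)"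
    using affine_fn_segment[OF assms(1), of u x r] u(3) assms(4) by simp
  moreover have "0 \<le> u * F r"
    using u(1) assms(5) by simp
  ultimately show ?thesis
    using u(2) \<open>u \<noteq> 1\<close> by (smt (verit) mult_pos_pos)
qed

lemma affine_fns_segment_entry:
  assumes aff: "affine_fn F1" "affine_fn F2" "affine_fn F3"
    and pos: "0 < F1 r" "0 < F2 r" "0 < F3 r" and "x \<noteq> r"
  obtains y where "y \<in> closed_segment x r" "y \<noteq> r" "0 \<le> F1 y" "0 \<le> F2 y" "0 \<le> F3 y"
    "y = x \<or> F1 y = 0 \<or> F2 y = 0 \<or> F3 y = 0"
proof -
  let ?g = "linepath x r"
  define m where "m t = min (F1 (?g t)) (min (F2 (?g t)) (F3 (?g t)))" for t
  have "m = (\<lambda>t. min ((1 - t) * F1 x + t * F1 r)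
      (min ((1 - t) * F2 x + t * F2 r) ((1 - t) * F3 x + t * F3 r)))"
    unfolding m_def linepath_def
    using affine_fn_segment[OF aff(1)] affine_fn_segment[OF aff(2)] affine_fn_segment[OF aff(3)]
    by simp
  then have "continuous_on {0..1} m"
    by (simp add: continuous_intros)
  show ?thesis
  proof (cases "0 \<le> m 0")
    case True
    then show ?thesis
      using that[of x] \<open>x \<noteq> r\<close> unfolding m_def by (auto simp: linepath_0')
  next
    case False
    moreover have "0 < m 1"
      using pos unfolding m_def by (simp add: linepath_1')
    ultimately obtain t where t: "0 \<le> t" "t \<le> 1" "m t = 0"
      using IVT'[of m 0 0 1] \<open>continuous_on {0..1} m\<close> by force
    then have "t \<noteq> 1"
      using \<open>0 < m 1\<close> by auto
    then have "?g t \<noteq> ?g 1"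
      using inj_on_linepath[OF \<open>x \<noteq> r\<close>] t(1,2) by (auto dest: inj_onD)
    show ?thesis
    proof (rule that[of "?g t"])
      show "?g t \<in> closed_segment x r"
        using t(1,2) by (simp add: linepath_in_path)
      show "?g t \<noteq> r"
        using \<open>?g t \<noteq> ?g 1\<close> by (simp add: linepath_1')
      show "0 \<le> F1 (?g t)" "0 \<le> F2 (?g t)" "0 \<le> F3 (?g t)"
        using t(3) unfolding m_def by auto
      show "?g t = x \<or> F1 (?g t) = 0 \<or> F2 (?g t) = 0 \<or> F3 (?g t) = 0"
        using t(3) unfolding m_def by (auto simp: min_def split: if_splits)
    qed
  qed
qed

lemma closed_segment_part_in_open_segment:
  fixes x e r y :: "'a::euclidean_space"
  assumes "r \<in> open_segment x e" "y \<in> closed_segment x r" "y \<noteq> x"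
  shows "y \<in> open_segment x e"
  using assms Un_open_segment[OF assms(1)] closed_segment_eq_open[of x r] by blast

section \<open>Segments crossing an obstacle edge\<close>

lemma connected_subset_inside:
  assumes "connected T" "T \<inter> S = {}" "x \<in> T" "x \<in> inside S"
  shows "T \<subseteq> inside S"
proof
  fix y assume "y \<in> T"
  then have "connected_component (- S) x y"
    using assms(1-3) by (intro connected_componentI[of T]) auto
  then show "y \<in> inside S"
    using assms(4) by (rule inside_same_component)
qed

lemma line_point_near_open_segment:
  assumes r: "r \<in> open_segment c1 c2" and x: "cross (c2 - c1) (x - c1) = 0"
    and near: "dist x r < dist r c1" "dist x r < dist r c2"
  shows "x \<in> closed_segment c1 c2"
proof -
  obtain t0 where t0: "0 < t0" "t0 < 1" "r = c1 + t0 *\<^sub>R (c2 - c1)" and "c1 \<noteq> c2"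
    using r unfolding in_segment by (auto simp: algebra_simps)
  then obtain t where t: "x - c1 = t *\<^sub>R (c2 - c1)"
    using cross_eq_0_imp_parallel[OF x] by auto
  have rc1: "r - c1 = t0 *\<^sub>R (c2 - c1)"
    using t0(3) by simp
  have "x - r = (x - c1) - (r - c1)" "r - c2 = (r - c1) - (c2 - c1)"
    by simp_all
  then have "x - r = (t - t0) *\<^sub>R (c2 - c1)" "r - c2 = (t0 - 1) *\<^sub>R (c2 - c1)"
    unfolding t rc1 by (simp_all add: scaleR_diff_left)
  with rc1 have "\<bar>t - t0\<bar> * norm (c2 - c1) < t0 * norm (c2 - c1)"
    "\<bar>t - t0\<bar> * norm (c2 - c1) < (1 - t0) * norm (c2 - c1)"
    using near t0 by (simp_all add: dist_norm)
  then have "0 \<le> t" "t \<le> 1"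
    by (auto simp: mult_less_cancel_right)
  then show ?thesis
    unfolding in_segment using t by (intro exI[of _ t]) (auto simp: algebra_simps)
qed

lemma open_edge_point_notin_other_edge:
  assumes P: "simple_polygon P" and "k < length P" "j < length P" "j \<noteq> k"
    and r: "r \<in> open_segment (P ! k) (P ! ((k + 1) mod length P))"
  shows "r \<notin> poly_edge P j"
proof
  assume "r \<in> poly_edge P j"
  moreover have "r \<in> poly_edge P k"
    using r by (simp add: poly_edge_def open_closed_segment)
  moreover have "r \<noteq> P ! k" "r \<noteq> P ! ((k + 1) mod length P)"
    using r by (auto simp: open_segment_def)
  ultimately show False
    using simple_polygon_edges_inter[OF P assms(2,3) assms(4)[symmetric]] by auto
qed

lemma poly_boundary_near_open_edge:
  assumes P: "simple_polygon P" and k: "k < length P"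
    and r: "r \<in> open_segment (P ! k) (P ! ((k + 1) mod length P))"
  obtains e where "e > 0" "\<And>x. x \<in> ball r e \<Longrightarrow>
    x \<in> poly_boundary P \<longleftrightarrow> cross (P ! ((k + 1) mod length P) - P ! k) (x - P ! k) = 0"
proof -
  define c1 where "c1 = P ! k"
  define c2 where "c2 = P ! ((k + 1) mod length P)"
  define U where "U = (\<Union>j\<in>{j. j < length P \<and> j \<noteq> k}. poly_edge P j)"
  have edge: "poly_edge P k = closed_segment c1 c2"
    unfolding c1_def c2_def poly_edge_def ..
  have boundary: "poly_boundary P = U \<union> closed_segment c1 c2"
    unfolding poly_boundary_def U_def edge[symmetric] using k by auto
  have r': "r \<in> open_segment c1 c2"
    using r unfolding c1_def c2_def .
  then have "r \<noteq> c1" "r \<noteq> c2"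
    by (auto simp: open_segment_def)
  have "r \<notin> U"
    using open_edge_point_notin_other_edge[OF P k _ _ r] unfolding U_def by blast
  moreover have "open (- U)"
    unfolding U_def poly_edge_def by (intro open_Compl closed_UN) auto
  ultimately obtain e1 where "e1 > 0" "ball r e1 \<subseteq> - U"
    by (meson ComplI open_contains_ball)
  define e where "e = min e1 (min (dist r c1) (dist r c2))"
  have "e > 0"
    using \<open>e1 > 0\<close> \<open>r \<noteq> c1\<close> \<open>r \<noteq> c2\<close> by (simp add: e_def)
  moreover have "x \<in> poly_boundary P \<longleftrightarrow> cross (c2 - c1) (x - c1) = 0" if "x \<in> ball r e" for x
  proof
    assume "x \<in> poly_boundary P"
    moreover have "x \<notin> U"
      using that \<open>ball r e1 \<subseteq> - U\<close> by (auto simp: e_def)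
    ultimately show "cross (c2 - c1) (x - c1) = 0"
      unfolding boundary using cross_closed_segment by blast
  next
    assume "cross (c2 - c1) (x - c1) = 0"
    moreover have "dist x r < dist r c1" "dist x r < dist r c2"
      using that by (auto simp: e_def dist_commute)
    ultimately show "x \<in> poly_boundary P"
      unfolding boundary using line_point_near_open_segment[OF r'] by blast
  qed
  ultimately show ?thesis
    using that unfolding c1_def c2_def by blast
qed

lemma poly_interior_beside_open_edge:
  assumes P: "simple_polygon P" and k: "k < length P"
    and r: "r \<in> open_segment (P ! k) (P ! ((k + 1) mod length P))"
  obtains e \<sigma> where "e > 0" "\<sigma> \<noteq> 0" "\<And>x. x \<in> ball r e \<Longrightarrow>
    0 < \<sigma> * cross (P ! ((k + 1) mod length P) - P ! k) (x - P ! k) \<Longrightarrow> x \<in> poly_interior P"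
proof -
  define L where "L x = cross (P ! ((k + 1) mod length P) - P ! k) (x - P ! k)" for x
  obtain e where "e > 0" and near: "\<And>x. x \<in> ball r e \<Longrightarrow> x \<in> poly_boundary P \<longleftrightarrow> L x = 0"
    using poly_boundary_near_open_edge[OF P k r] unfolding L_def by blast
  have "r \<in> poly_boundary P"
    using r poly_edge_subset_boundary[OF k] by (auto simp: poly_edge_def open_closed_segment)
  then have "r \<in> closure (poly_interior P)"
    using poly_boundary_subset_closure_interior[OF P] by blast
  then obtain q where q: "q \<in> poly_interior P" "dist q r < e"
    using \<open>e > 0\<close> closure_approachable by blast
  then have "q \<notin> poly_boundary P" "q \<in> ball r e"
    using poly_boundary_disjoint_interior by (auto simp: dist_commute)
  then have "L q \<noteq> 0"
    using near by blast
  define H where "H = ball r e \<inter> {x. 0 < L q * L x}"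
  have "affine_fn (\<lambda>x. L q * L x)"
    unfolding L_def by (intro affine_fn_mult affine_fn_cross_right)
  then have "connected H"
    unfolding H_def by (intro convex_connected convex_Int convex_ball convex_affine_fn_pos)
  moreover have "H \<inter> poly_boundary P = {}"
    using near unfolding H_def by auto
  moreover have "q \<in> H"
    using \<open>q \<in> ball r e\<close> \<open>L q \<noteq> 0\<close> not_real_square_gt_zero unfolding H_def by blast
  ultimately have "H \<subseteq> poly_interior P"
    using q(1) connected_subset_inside unfolding poly_interior_def by blast
  then show ?thesis
    using that[OF \<open>e > 0\<close> \<open>L q \<noteq> 0\<close>] unfolding H_def L_def by blast
qed

lemma segment_crossing_open_edge_meets_poly_interior:
  assumes P: "simple_polygon P" and k: "k < length P"
    and r: "r \<in> open_segment (P ! k) (P ! ((k + 1) mod length P))" "r \<in> closed_segment s1 s2"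
    and off: "cross (P ! ((k + 1) mod length P) - P ! k) (s1 - P ! k) \<noteq> 0"
      "cross (P ! ((k + 1) mod length P) - P ! k) (s2 - P ! k) \<noteq> 0"
  shows "closed_segment s1 s2 \<inter> poly_interior P \<noteq> {}"
proof -
  define L where "L x = cross (P ! ((k + 1) mod length P) - P ! k) (x - P ! k)" for x
  obtain e \<sigma> where "e > 0" "\<sigma> \<noteq> 0"
    and inside: "\<And>x. x \<in> ball r e \<Longrightarrow> 0 < \<sigma> * L x \<Longrightarrow> x \<in> poly_interior P"
    using poly_interior_beside_open_edge[OF P k r(1)] unfolding L_def by blast
  have aff: "affine_fn (\<lambda>x. \<sigma> * L x)"
    unfolding L_def by (intro affine_fn_mult affine_fn_cross_right)
  have "L r = 0"
    unfolding L_def using cross_closed_segment open_closed_segment[OF r(1)] by blast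
  then obtain s where s: "s \<in> {s1, s2}" "0 < \<sigma> * L s"
    using affine_fn_pos_at_segment_end[OF aff r(2)] off \<open>\<sigma> \<noteq> 0\<close> unfolding L_def by auto
  then have "r \<noteq> s"
    using \<open>L r = 0\<close> by auto
  then have "r \<in> closure (open_segment r s)"
    by simp
  then obtain y where y: "y \<in> open_segment r s" "dist y r < e"
    using \<open>e > 0\<close> closure_approachable by blast
  then obtain u where "0 < u" "y = (1 - u) *\<^sub>R r + u *\<^sub>R s"
    unfolding in_segment by auto
  then have "\<sigma> * L y = u * (\<sigma> * L s)"
    using affine_fn_segment[OF aff, of u r s] \<open>L r = 0\<close> by simp
  then have "0 < \<sigma> * L y"
    using \<open>0 < u\<close> s(2) by (simp only: mult_pos_pos)
  then have "y \<in> poly_interior P"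
    using inside y(2) by (simp add: dist_commute)
  moreover have "y \<in> closed_segment s1 s2"
    using y(1) s(1) r(2) open_closed_segment subset_closed_segment by blast
  ultimately show ?thesis by blast
qed

section \<open>General position and visibility\<close>

lemma general_position_cross:
  assumes "general_position V" "a \<in> V" "b \<in> V" "c \<in> V" "a \<noteq> b" "a \<noteq> c" "b \<noteq> c"
  shows "cross (b - a) (c - a) \<noteq> 0"
proof -
  have "\<not> collinear {a, b, c}"
    using assms unfolding general_position_def by blast
  then show ?thesis
    using collinear_if_cross_eq_0 by blast
qed

lemma general_position_notin_open_segment:
  assumes "general_position V" "a \<in> V" "b \<in> V" "v \<in> V"
  shows "v \<notin> open_segment a b"
proof
  assume v: "v \<in> open_segment a b"
  then have "cross (b - a) (v - a) = 0"
    using cross_closed_segment open_closed_segment by blast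
  moreover have "a \<noteq> b" "v \<noteq> a" "v \<noteq> b"
    using v by (auto simp: open_segment_def)
  ultimately show False
    using general_position_cross[OF assms(1-4)] by simp
qed

lemma general_position_open_segments_eq:
  assumes gp: "general_position V" and V: "a \<in> V" "b \<in> V" "e \<in> V"
    and y: "y \<in> open_segment a b" "y \<in> open_segment a e"
  shows "b = e"
proof (rule ccontr)
  assume "b \<noteq> e"
  obtain s where s: "0 < s" "y = (1 - s) *\<^sub>R a + s *\<^sub>R b" and "a \<noteq> b"
    using y(1) unfolding in_segment by blast
  obtain t where t: "y = (1 - t) *\<^sub>R a + t *\<^sub>R e" and "a \<noteq> e"
    using y(2) unfolding in_segment by blast
  have st: "s *\<^sub>R (b - a) = t *\<^sub>R (e - a)"
    using s(2) t by (simp add: algebra_simps)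
  have "b - a = inverse s *\<^sub>R (s *\<^sub>R (b - a))"
    using s(1) by simp
  also have "\<dots> = (t / s) *\<^sub>R (e - a)"
    unfolding st by (simp add: divide_inverse_commute)
  finally have "cross (e - a) (b - a) = 0" by simp
  then show False
    using general_position_cross[OF gp V(1,3,2)] \<open>a \<noteq> b\<close> \<open>a \<noteq> e\<close> \<open>b \<noteq> e\<close> by auto
qed

lemma general_position_crossing_ends_distinct:
  assumes gp: "general_position V" and V: "a \<in> V" "b \<in> V" "c \<in> V" "d \<in> V"
    and p: "p \<in> open_segment a b" "p \<in> open_segment c d" and ends: "{a, b} \<noteq> {c, d}"
  shows "a \<noteq> c" "a \<noteq> d" "b \<noteq> c" "b \<noteq> d"
proof -
  have p': "p \<in> open_segment b a" "p \<in> open_segment d c"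
    using p by (simp_all add: open_segment_commute)
  show "a \<noteq> c"
    using general_position_open_segments_eq[OF gp V(1,2,4) p(1)] p(2) ends by auto
  show "a \<noteq> d"
    using general_position_open_segments_eq[OF gp V(1,2,3) p(1)] p'(2) ends by auto
  show "b \<noteq> c"
    using general_position_open_segments_eq[OF gp V(2,1,4) p'(1)] p(2) ends by auto
  show "b \<noteq> d"
    using general_position_open_segments_eq[OF gp V(2,1,3) p'(1)] p'(2) ends by auto
qed

lemma general_position_crossing_off_line:
  assumes gp: "general_position V" and V: "c1 \<in> V" "c2 \<in> V" "a \<in> V" "b \<in> V"
    and y: "y \<in> open_segment c1 c2" "y \<in> open_segment a b" and ends: "{a, b} \<noteq> {c1, c2}"
  shows "cross (c2 - c1) (a - c1) \<noteq> 0"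
proof -
  have "a \<noteq> c1" "a \<noteq> c2" "c1 \<noteq> c2"
    using general_position_crossing_ends_distinct[OF gp V(3,4,1,2) y(2,1) ends] y(1) by auto
  then show ?thesis
    using general_position_cross[OF gp V(1-3)] by blast
qed

lemma obstacle_simple_polygon: "obstacle_setting V S \<Longrightarrow> P \<in> S \<Longrightarrow> simple_polygon P"
  unfolding obstacle_setting_def by blast

lemma obstacle_corners_subset: "obstacle_setting V S \<Longrightarrow> P \<in> S \<Longrightarrow> set P \<subseteq> V"
  unfolding obstacle_setting_def by blast

lemma obstacle_edge_ends_in_vertices:
  assumes "obstacle_setting V S" "P \<in> S" "k < length P"
  shows "P ! k \<in> V" "P ! ((k + 1) mod length P) \<in> V"
proof -
  have "length P > 0"
    using assms(3) by linarith
  then have "k < length P" "(k + 1) mod length P < length P"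
    using assms(3) by simp_all
  then show "P ! k \<in> V" "P ! ((k + 1) mod length P) \<in> V"
    using obstacle_corners_subset[OF assms(1,2)] nth_mem by blast+
qed

lemma obstacle_corner_notin_poly_interior:
  assumes os: "obstacle_setting V S" and "P \<in> S" "Q \<in> S" "c \<in> set P"
  shows "c \<notin> poly_interior Q"
proof -
  have "c \<in> poly_boundary P"
    using assms(4) by (rule corner_in_poly_boundary)
  moreover have "P \<noteq> Q \<Longrightarrow> poly_boundary P \<inter> poly_interior Q = {}"
    using os assms(2,3) unfolding obstacle_setting_def by blast
  ultimately show ?thesis
    using poly_boundary_disjoint_interior by blast
qed

lemma visible_crossing_open_edge_is_edge:
  assumes os: "obstacle_setting V S" and gp: "general_position V" and P: "P \<in> S" "k < length P"
    and s: "s1 \<in> V" "s2 \<in> V" "visible S s1 s2"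
    and y: "y \<in> open_segment (P ! k) (P ! ((k + 1) mod length P))" "y \<in> closed_segment s1 s2"
  shows "{s1, s2} = {P ! k, P ! ((k + 1) mod length P)}"
proof (rule ccontr)
  assume ends: "{s1, s2} \<noteq> {P ! k, P ! ((k + 1) mod length P)}"
  note corners = obstacle_edge_ends_in_vertices[OF os P]
  have "y \<noteq> s1" "y \<noteq> s2"
    using general_position_notin_open_segment[OF gp corners] y(1) s(1,2) by blast+
  then have "y \<in> open_segment s1 s2"
    using y(2) by (simp add: open_segment_def)
  then have "cross (P ! ((k + 1) mod length P) - P ! k) (s1 - P ! k) \<noteq> 0"
    "cross (P ! ((k + 1) mod length P) - P ! k) (s2 - P ! k) \<noteq> 0"
    using general_position_crossing_off_line[OF gp corners s(1,2) y(1)]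
      general_position_crossing_off_line[OF gp corners s(2,1) y(1)] ends
    by (auto simp: open_segment_commute insert_commute)
  then have "closed_segment s1 s2 \<inter> poly_interior P \<noteq> {}"
    using segment_crossing_open_edge_meets_poly_interior[OF obstacle_simple_polygon[OF os P(1)] P(2) y]
    by blast
  then show False
    using s(3) P(1) unfolding visible_def by blast
qed

lemma visible_crossing_notin_poly_boundary:
  assumes os: "obstacle_setting V S" and gp: "general_position V" and P: "P \<in> S"
    and V: "a \<in> V" "b \<in> V" "c \<in> V" "d \<in> V" and ends: "{a, b} \<noteq> {c, d}"
    and p: "p \<in> open_segment a b" "p \<in> open_segment c d"
    and vis: "visible S a b" "visible S c d"
  shows "p \<notin> poly_boundary P"
proof
  assume "p \<in> poly_boundary P"
  then obtain k where k: "k < length P" "p \<in> closed_segment (P ! k) (P ! ((k + 1) mod length P))"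
    unfolding poly_boundary_def poly_edge_def by blast
  moreover have "p \<noteq> P ! k" "p \<noteq> P ! ((k + 1) mod length P)"
    using general_position_notin_open_segment[OF gp V(1,2)]
      obstacle_edge_ends_in_vertices[OF os P k(1)]
      p(1) by blast+
  ultimately have "p \<in> open_segment (P ! k) (P ! ((k + 1) mod length P))"
    by (simp add: open_segment_def)
  then show False
    using visible_crossing_open_edge_is_edge[OF os gp P k(1) V(1,2) vis(1)]
      visible_crossing_open_edge_is_edge[OF os gp P k(1) V(3,4) vis(2)] p ends
    by (metis open_closed_segment)
qed

section \<open>Cone coordinates and canonical triangles\<close>

definition cone_coord :: "nat \<Rightarrow> pt \<Rightarrow> real" where
  "cone_coord k q = dotp q (dir (bisector k))"

lemma cone_coord_0: "cone_coord 0 q = snd q"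
  by (simp add: cone_coord_def dotp_def dir_def bisector_def)

lemma cone_coord_1: "cone_coord 1 q = - sqrt 3 / 2 * fst q - snd q / 2"
proof -
  have b: "bisector 1 = pi / 6 + pi"
    unfolding bisector_def by (simp add: field_simps)
  show ?thesis
    unfolding cone_coord_def dotp_def dir_def b cos_periodic_pi sin_periodic_pi cos_30 sin_30
    by simp
qed

lemma cone_coord_2: "cone_coord 2 q = sqrt 3 / 2 * fst q - snd q / 2"
proof -
  have b: "bisector 2 = - (pi / 6) + 2 * pi"
    unfolding bisector_def by (simp add: field_simps)
  show ?thesis
    unfolding cone_coord_def dotp_def dir_def b cos_periodic sin_periodic cos_minus sin_minus
      cos_30 sin_30
    by simp
qed

lemma cone_coord_add [simp]: "cone_coord k (x + y) = cone_coord k x + cone_coord k y"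
  and cone_coord_diff [simp]: "cone_coord k (x - y) = cone_coord k x - cone_coord k y"
  and cone_coord_scaleR [simp]: "cone_coord k (c *\<^sub>R x) = c * cone_coord k x"
  by (simp_all add: cone_coord_def dotp_def algebra_simps)

lemma affine_fn_cone_coord: "affine_fn (cone_coord k)"
  unfolding affine_fn_def cone_coord_def dotp_def
  by (intro exI[of _ 0] exI[of _ "fst (dir (bisector k))"] exI[of _ "snd (dir (bisector k))"]) simp

lemma proj_eq_cone_coord: "proj u i v = cone_coord i v - cone_coord i u"
  by (simp add: proj_def cone_coord_def[symmetric])

lemma cone_coords_sum: "cone_coord 0 q + cone_coord 1 q + cone_coord 2 q = 0"
  unfolding cone_coord_0 cone_coord_1 cone_coord_2 by simp

lemma cone_coords_sum_squares:
  "(cone_coord 0 q)\<^sup>2 + (cone_coord 1 q)\<^sup>2 + (cone_coord 2 q)\<^sup>2 = 3 / 2 * (norm q)\<^sup>2"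
  unfolding cone_coord_0 cone_coord_1 cone_coord_2 norm_prod_def
  by (simp add: power2_eq_square algebra_simps)

lemma sqrt3_half_le_iff:
  fixes X Y Z n :: real
  assumes sum: "X + Y + Z = 0" and squares: "X\<^sup>2 + Y\<^sup>2 + Z\<^sup>2 = 3 / 2 * n\<^sup>2" and "0 \<le> n"
  shows "sqrt 3 / 2 * n \<le> X \<longleftrightarrow> Y \<le> 0 \<and> Z \<le> 0"
proof -
  have X: "X = - (Y + Z)"
    using sum by linarith
  have "0 \<le> sqrt 3 / 2 * n"
    using \<open>0 \<le> n\<close> by simp
  then have "sqrt 3 / 2 * n \<le> X \<longleftrightarrow> 0 \<le> X \<and> (sqrt 3 / 2 * n)\<^sup>2 \<le> X\<^sup>2"
    by (smt (verit) power2_le_imp_le power_mono)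
  also have "(sqrt 3 / 2 * n)\<^sup>2 = (X\<^sup>2 + Y\<^sup>2 + Z\<^sup>2) / 2"
    unfolding squares by (simp add: power_mult_distrib power_divide)
  also have "X\<^sup>2 = Y\<^sup>2 + Z\<^sup>2 + 2 * (Y * Z)"
    unfolding X by (simp add: power2_eq_square algebra_simps)
  finally have "sqrt 3 / 2 * n \<le> X \<longleftrightarrow> 0 \<le> X \<and> 0 \<le> Y * Z"
    by auto
  then show ?thesis
    unfolding X by (auto simp: zero_le_mult_iff)
qed

lemma in_pcone_iff:
  assumes "i < 3"
  shows "in_pcone u i v \<longleftrightarrow> v \<noteq> u \<and> (\<forall>k<3. k \<noteq> i \<longrightarrow> cone_coord k v \<le> cone_coord k u)"
proof -
  define d where "d = v - u"
  have "in_pcone u i v \<longleftrightarrow> v \<noteq> u \<and> sqrt 3 / 2 * norm d \<le> cone_coord i d"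
    unfolding in_pcone_def proj_eq_cone_coord d_def dist_norm cos_30 by simp
  moreover have "sqrt 3 / 2 * norm d \<le> cone_coord i d \<longleftrightarrow> (\<forall>k<3. k \<noteq> i \<longrightarrow> cone_coord k d \<le> 0)"
  proof -
    have all3: "(\<forall>k<3. Q k) \<longleftrightarrow> Q 0 \<and> Q 1 \<and> Q 2" for Q :: "nat \<Rightarrow> bool"
      by (auto simp: numeral_3_eq_3 numeral_2_eq_2 less_Suc_eq)
    note arith = sqrt3_half_le_iff[OF _ _ norm_ge_zero[of d]]
    note sums = cone_coords_sum[of d] cone_coords_sum_squares[of d]
    consider "i = 0" | "i = 1" | "i = 2"
      using assms by linarith
    then show ?thesis
    proof cases
      case 1
      then show ?thesis
        using arith[of "cone_coord 0 d" "cone_coord 1 d" "cone_coord 2 d"] sums by (simp add: all3)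
    next
      case 2
      then show ?thesis
        using arith[of "cone_coord 1 d" "cone_coord 0 d" "cone_coord 2 d"] sums
        by (simp add: all3 algebra_simps)
    next
      case 3
      then show ?thesis
        using arith[of "cone_coord 2 d" "cone_coord 0 d" "cone_coord 1 d"] sums
        by (simp add: all3 algebra_simps)
    qed
  qed
  ultimately show ?thesis
    unfolding d_def by simp
qed

lemma in_pcone_cone_coord_less:
  assumes "in_pcone u i v"
  shows "cone_coord i u < cone_coord i v"
proof -
  have "0 < cos (pi / 6) * dist v u"
    using assms by (simp add: in_pcone_def cos_30)
  then show ?thesis
    using assms unfolding in_pcone_def proj_eq_cone_coord by linarith
qed

lemma cone_coord_eq_0_imp_boundary_dir:
  assumes "i < 3" "cone_coord i d = 0"
  obtains k c where "k < 3" "d = c *\<^sub>R dir (real k * pi / 3)"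
proof -
  consider "i = 0" | "i = 1" | "i = 2"
    using assms(1) by linarith
  then show thesis
  proof cases
    case 1
    then have "d = fst d *\<^sub>R dir (real 0 * pi / 3)"
      using assms(2) by (simp add: cone_coord_0 dir_def prod_eq_iff)
    then show thesis by (rule that[rotated]) simp
  next
    case 2
    have "snd d = - sqrt 3 * fst d"
      using assms(2)[unfolded 2 cone_coord_1] by simp
    moreover have dir2: "dir (real 2 * pi / 3) = (- 1 / 2, sqrt 3 / 2)"
      unfolding dir_def using sin_120' cos_120 by (simp add: mult.commute)
    ultimately have "d = (- 2 * fst d) *\<^sub>R dir (real 2 * pi / 3)"
      unfolding dir2 by (simp add: prod_eq_iff algebra_simps)
    then show thesis by (rule that[rotated]) simp
  next
    case 3
    have "snd d = sqrt 3 * fst d"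
      using assms(2)[unfolded 3 cone_coord_2] by simp
    then have "d = (2 * fst d) *\<^sub>R dir (real 1 * pi / 3)"
      by (simp add: dir_def prod_eq_iff sin_60 cos_60)
    then show thesis by (rule that[rotated]) simp
  qed
qed

lemma general_position_cone_coord_neq:
  assumes gp: "general_position V" and "x \<in> V" "y \<in> V" "x \<noteq> y" "i < 3"
  shows "cone_coord i x \<noteq> cone_coord i y"
proof
  have "\<forall>a\<in>V. \<forall>b\<in>V. a \<noteq> b \<longrightarrow> (\<forall>k::nat<3. \<forall>c. b - a \<noteq> c *\<^sub>R dir (real k * pi / 3))"
    using gp unfolding general_position_def by (rule conjunct2)
  note not_boundary_dir = this[rule_format, OF assms(3,2) assms(4)[symmetric]]
  assume "cone_coord i x = cone_coord i y"
  then have "cone_coord i (x - y) = 0"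
    by simp
  then show False
    using cone_coord_eq_0_imp_boundary_dir[OF assms(5)] not_boundary_dir by metis
qed

text \<open>For \<open>b\<close> in the cone \<open>C\<^sub>i\<close> of \<open>a\<close> this is the canonical triangle of \<open>ab\<close>: the
  equilateral triangle with apex \<open>a\<close> cut off from \<open>C\<^sub>i\<close> by the line through \<open>b\<close> orthogonal to
  the bisector.\<close>

definition canon_tri :: "pt \<Rightarrow> pt \<Rightarrow> pt set" where
  "canon_tri a b = {q. \<forall>k<3. cone_coord k q \<le> max (cone_coord k a) (cone_coord k b)}"

lemma in_pcone_canon_tri:
  assumes "i < 3" "in_pcone a i b" "q \<in> canon_tri a b" "q \<noteq> a"
  shows "in_pcone a i q"
proof -
  have "cone_coord k q \<le> cone_coord k a" if "k < 3" "k \<noteq> i" for k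
  proof -
    have "cone_coord k b \<le> cone_coord k a"
      using assms(2) that unfolding in_pcone_iff[OF assms(1)] by blast
    moreover have "cone_coord k q \<le> max (cone_coord k a) (cone_coord k b)"
      using assms(3) that(1) unfolding canon_tri_def by blast
    ultimately show ?thesis
      by simp
  qed
  then show ?thesis
    unfolding in_pcone_iff[OF assms(1)] using assms(4) by blast
qed

lemma canon_tri_cone_coord_le:
  assumes "in_pcone a i b" "i < 3" "q \<in> canon_tri a b"
  shows "cone_coord i q \<le> cone_coord i b"
  using assms(2,3) in_pcone_cone_coord_less[OF assms(1)] unfolding canon_tri_def by auto

lemma crossing_segments_canon_tri:
  assumes "p \<in> closed_segment a b" "p \<in> closed_segment c d"
  shows "c \<in> canon_tri a b \<or> d \<in> canon_tri a b \<or> a \<in> canon_tri c d \<or> b \<in> canon_tri c d"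
proof (rule ccontr)
  assume "\<not> ?thesis"
  then obtain k1 k2 k3 k4 where k: "k1 < 3" "k2 < 3" "k3 < 3" "k4 < 3"
    and c: "max (cone_coord k1 a) (cone_coord k1 b) < cone_coord k1 c"
    and d: "max (cone_coord k2 a) (cone_coord k2 b) < cone_coord k2 d"
    and a: "max (cone_coord k3 c) (cone_coord k3 d) < cone_coord k3 a"
    and b: "max (cone_coord k4 c) (cone_coord k4 d) < cone_coord k4 b"
    unfolding canon_tri_def by (auto simp: not_le)
  note between = affine_fn_segment_between[OF affine_fn_cone_coord]
  \<comment> \<open>The four witnesses are pairwise distinct, but there are only three cone coordinates.\<close>
  have "k1 \<noteq> k2"
  proof
    assume "k1 = k2"
    then have "max (cone_coord k1 a) (cone_coord k1 b) < min (cone_coord k1 c) (cone_coord k1 d)"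
      using c d by simp
    then show False
      using between(2)[OF assms(1), of k1] between(1)[OF assms(2), of k1] by linarith
  qed
  moreover have "k3 \<noteq> k4"
  proof
    assume "k3 = k4"
    then have "max (cone_coord k3 c) (cone_coord k3 d) < min (cone_coord k3 a) (cone_coord k3 b)"
      using a b by simp
    then show False
      using between(1)[OF assms(1), of k3] between(2)[OF assms(2), of k3] by linarith
  qed
  moreover have "k1 \<noteq> k3" "k1 \<noteq> k4" "k2 \<noteq> k3" "k2 \<noteq> k4"
    using a b c d by (metis max.strict_boundedE order.asym)+
  ultimately show False
    using k by linarith
qed

section \<open>A vertex beating a chosen neighbour\<close>

locale crossed_edge =
  fixes V :: "pt set" and S :: "pt list set" and a b c d w p :: pt and i :: nat
  assumes obstacles: "obstacle_setting V S" and gp: "general_position V"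
    and vertices: "a \<in> V" "b \<in> V" "c \<in> V" "d \<in> V"
    and cone: "i < 3" "in_pcone a i b"
    and visible: "visible S a b" "visible S c d"
    and crossing: "p \<in> open_segment a b" "p \<in> open_segment c d" "{a, b} \<noteq> {c, d}"
    and w: "w = c \<or> w = d" "w \<in> canon_tri a b"
begin

lemma w_vertex: "w \<in> V" and w_ne_a: "w \<noteq> a" and w_ne_b: "w \<noteq> b"
  using w(1) vertices general_position_crossing_ends_distinct[OF gp vertices crossing] by auto

lemma a_ne_b: "a \<noteq> b"
  using cone(2) by (auto simp: in_pcone_def)

lemma p_on_ab: obtains s where "0 < s" "s < 1" "p - a = s *\<^sub>R (b - a)"
proof -
  obtain s where "0 < s" "s < 1" "p = (1 - s) *\<^sub>R a + s *\<^sub>R b"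
    using crossing(1) unfolding in_segment by blast
  then show thesis
    using that by (simp add: algebra_simps)
qed

definition det_apw :: real where
  "det_apw = cross (p - a) (w - a)"

definition coord_p :: "pt \<Rightarrow> real" where
  "coord_p q = cross (q - a) (w - a) / det_apw"

definition coord_w :: "pt \<Rightarrow> real" where
  "coord_w q = cross (p - a) (q - a) / det_apw"

lemma det_apw_ne_0: "det_apw \<noteq> 0"
proof -
  obtain s where "0 < s" "p - a = s *\<^sub>R (b - a)"
    using p_on_ab by metis
  moreover have "cross (b - a) (w - a) \<noteq> 0"
    using general_position_cross[OF gp vertices(1,2) w_vertex a_ne_b]
      w_ne_a[symmetric] w_ne_b[symmetric] by blast
  ultimately show ?thesis
    unfolding det_apw_def by simp
qed

lemma affine_fn_coord_p: "affine_fn coord_p" and affine_fn_coord_w: "affine_fn coord_w"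
  unfolding coord_p_def[abs_def] coord_w_def[abs_def]
  by (intro affine_fn_divide affine_fn_cross_left affine_fn_cross_right)+

lemma coord_p_a [simp]: "coord_p a = 0" and coord_w_a [simp]: "coord_w a = 0"
  and coord_p_p [simp]: "coord_p p = 1" and coord_w_p [simp]: "coord_w p = 0"
  and coord_p_w [simp]: "coord_p w = 0" and coord_w_w [simp]: "coord_w w = 1"
  using det_apw_ne_0 by (simp_all add: coord_p_def coord_w_def det_apw_def cross_def)

lemma coord_w_b [simp]: "coord_w b = 0" and coord_p_b: "1 < coord_p b"
proof -
  obtain s where s: "0 < s" "s < 1" "p - a = s *\<^sub>R (b - a)"
    using p_on_ab by metis
  then have "b - a = (1 / s) *\<^sub>R (p - a)"
    by simp
  then have "cross (b - a) (w - a) = (1 / s) * det_apw" "cross (p - a) (b - a) = 0"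
    unfolding det_apw_def by simp_all
  then show "coord_w b = 0" "1 < coord_p b"
    using det_apw_ne_0 s unfolding coord_p_def coord_w_def by simp_all
qed

lemma coord_decomposition: "q - a = coord_p q *\<^sub>R (p - a) + coord_w q *\<^sub>R (w - a)"
proof -
  have cramer: "det_apw *\<^sub>R (q - a) =
      cross (q - a) (w - a) *\<^sub>R (p - a) + cross (p - a) (q - a) *\<^sub>R (w - a)"
    unfolding det_apw_def cross_def by (simp add: prod_eq_iff algebra_simps)
  have "q - a = inverse det_apw *\<^sub>R (det_apw *\<^sub>R (q - a))"
    using det_apw_ne_0 by simp
  also have "\<dots> = coord_p q *\<^sub>R (p - a) + coord_w q *\<^sub>R (w - a)"
    unfolding cramer coord_p_def coord_w_def by (simp add: scaleR_add_right divide_inverse_commute)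
  finally show ?thesis .
qed

lemma affine_fn_coord_decomposition:
  assumes "affine_fn F"
  shows "F q = F a + coord_p q * (F p - F a) + coord_w q * (F w - F a)"
proof -
  have "q = a + coord_p q *\<^sub>R (p - a) + coord_w q *\<^sub>R (w - a)"
    using coord_decomposition[of q] by (simp add: algebra_simps)
  then show ?thesis
    using affine_fn_combination[OF assms, of a "coord_p q" p "coord_w q" w] by simp
qed

lemma cross_coord_decomposition:
  "cross (x - a) (y - a) = (coord_p x * coord_w y - coord_w x * coord_p y) * det_apw"
  unfolding coord_decomposition[of x] coord_decomposition[of y] det_apw_def
  by (simp only: cross_add_left cross_add_right cross_scaleR_left cross_scaleR_right cross_self
      cross_antisym[of "w - a" "p - a"]) (simp add: algebra_simps)

definition tri_apw :: "pt set" where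
  "tri_apw = {q. 0 \<le> coord_p q \<and> 0 \<le> coord_w q \<and> coord_p q + coord_w q \<le> 1}"

lemma tri_apw_sum_pos:
  assumes "q \<in> tri_apw" "q \<noteq> a"
  shows "0 < coord_p q + coord_w q"
proof -
  have "coord_p q \<noteq> 0 \<or> coord_w q \<noteq> 0"
    using coord_decomposition[of q] assms(2) by auto
  then show ?thesis
    using assms(1) unfolding tri_apw_def by auto
qed

lemma affine_fn_tri_apw_le:
  assumes "affine_fn F" "q \<in> tri_apw" "F a \<le> m" "F p \<le> m" "F w \<le> m"
  shows "F q \<le> m"
  using assms(2-5) barycentric_le[of "coord_p q" "coord_w q" "F a" m "F p" "F w"]
  unfolding affine_fn_coord_decomposition[OF assms(1), of q] tri_apw_def by simp

lemma affine_fn_tri_apw_less: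
  assumes "affine_fn F" "q \<in> tri_apw" "F a < m" "F p < m" "F w < m"
  shows "F q < m"
  using assms(2-5) barycentric_less[of "coord_p q" "coord_w q" "F a" m "F p" "F w"]
  unfolding affine_fn_coord_decomposition[OF assms(1), of q] tri_apw_def by simp

lemma tri_apw_subset_canon_tri: "tri_apw \<subseteq> canon_tri a b"
proof
  fix q assume q: "q \<in> tri_apw"
  have "cone_coord k q \<le> max (cone_coord k a) (cone_coord k b)" if "k < 3" for k
  proof (rule affine_fn_tri_apw_le[OF affine_fn_cone_coord q])
    show "cone_coord k p \<le> max (cone_coord k a) (cone_coord k b)"
      using affine_fn_segment_between(2)[OF affine_fn_cone_coord]
        open_closed_segment[OF crossing(1)] by blast
    show "cone_coord k w \<le> max (cone_coord k a) (cone_coord k b)"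
      using w(2) that unfolding canon_tri_def by blast
  qed simp
  then show "q \<in> canon_tri a b"
    unfolding canon_tri_def by blast
qed

lemma in_pcone_tri_apw: "q \<in> tri_apw \<Longrightarrow> q \<noteq> a \<Longrightarrow> in_pcone a i q"
  using in_pcone_canon_tri[OF cone] tri_apw_subset_canon_tri by blast

lemma proj_tri_apw_less:
  assumes "q \<in> tri_apw"
  shows "proj a i q < proj a i b"
proof -
  have a_less: "cone_coord i a < cone_coord i b"
    using in_pcone_cone_coord_less[OF cone(2)] .
  obtain s where s: "0 < s" "s < 1" "p - a = s *\<^sub>R (b - a)"
    using p_on_ab by metis
  have "cone_coord i p - cone_coord i a = s * (cone_coord i b - cone_coord i a)"
    using arg_cong[OF s(3), of "cone_coord i"] by simp
  also have "\<dots> < cone_coord i b - cone_coord i a"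
    using s a_less by simp
  finally have "cone_coord i p < cone_coord i b"
    by simp
  moreover have "cone_coord i w < cone_coord i b"
    using canon_tri_cone_coord_le[OF cone(2,1) w(2)]
      general_position_cone_coord_neq[OF gp w_vertex vertices(2) w_ne_b cone(1)] by simp
  ultimately have "cone_coord i q < cone_coord i b"
    using affine_fn_tri_apw_less[OF affine_fn_cone_coord assms a_less] by blast
  then show ?thesis
    unfolding proj_eq_cone_coord by simp
qed

text \<open>The ray from \<open>a\<close> through \<open>q\<close> meets the line \<open>pw\<close> at the point with \<open>coord_w = ray_param q\<close>;
  hence \<open>ray_param\<close> orders the points of the triangle by the angle of \<open>aq\<close> with \<open>ab\<close>.\<close>

definition ray_param :: "pt \<Rightarrow> real" where
  "ray_param q = coord_w q / (coord_p q + coord_w q)"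

definition candidates :: "pt set" where
  "candidates = {v \<in> V. v \<in> tri_apw \<and> v \<noteq> a \<and> (\<forall>P\<in>S. v \<notin> poly_interior P)}"

definition z :: pt where
  "z = arg_min_on ray_param candidates"

lemma w_candidate: "w \<in> candidates"
proof -
  have "w \<in> closed_segment c d"
    using w(1) by auto
  then have "\<forall>P\<in>S. w \<notin> poly_interior P"
    using visible(2) unfolding visible_def by blast
  then show ?thesis
    unfolding candidates_def tri_apw_def using w_vertex w_ne_a by simp
qed

lemma z_candidate: "z \<in> candidates" and z_min: "v \<in> candidates \<Longrightarrow> ray_param z \<le> ray_param v"
proof -
  have "finite candidates"
    using obstacles unfolding obstacle_setting_def candidates_def by simp
  moreover have "candidates \<noteq> {}"
    using w_candidate by blast
  ultimately show "z \<in> candidates" "v \<in> candidates \<Longrightarrow> ray_param z \<le> ray_param v"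
    unfolding z_def by (auto intro: arg_min_if_finite(1) arg_min_least)
qed

lemma z_vertex: "z \<in> V" and z_in_tri_apw: "z \<in> tri_apw" and z_ne_a: "z \<noteq> a"
  using z_candidate unfolding candidates_def by auto

lemma coord_w_z_pos: "0 < coord_w z"
proof (rule ccontr)
  assume "\<not> 0 < coord_w z"
  then have "coord_w z = 0"
    using z_in_tri_apw unfolding tri_apw_def by auto
  then have "z \<noteq> b"
    using z_in_tri_apw coord_p_b unfolding tri_apw_def by auto
  obtain s where "p - a = s *\<^sub>R (b - a)"
    using p_on_ab by metis
  then have "cross (b - a) (z - a) = 0"
    using coord_decomposition[of z] \<open>coord_w z = 0\<close> by simp
  then show False
    using general_position_cross[OF gp vertices(1,2) z_vertex a_ne_b] z_ne_a \<open>z \<noteq> b\<close>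
    by auto
qed

lemma ray_param_z_pos: "0 < ray_param z" and ray_param_z_le_1: "ray_param z \<le> 1"
  using coord_w_z_pos tri_apw_sum_pos[OF z_in_tri_apw z_ne_a] z_in_tri_apw
  unfolding ray_param_def tri_apw_def by auto

text \<open>\<open>side_az\<close> vanishes on the line \<open>az\<close> and is positive on the side of \<open>b\<close>, so \<open>wedge\<close> is the
  part of the triangle \<open>apw\<close> between the rays \<open>ab\<close> and \<open>az\<close>.\<close>

definition side_az :: "pt \<Rightarrow> real" where
  "side_az q = ray_param z * coord_p q - (1 - ray_param z) * coord_w q"

definition side_pw :: "pt \<Rightarrow> real" where
  "side_pw q = 1 - coord_p q - coord_w q"

definition wedge :: "pt set" where
  "wedge = {q. 0 \<le> coord_w q \<and> 0 \<le> side_pw q \<and> 0 \<le> side_az q}"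

definition open_wedge :: "pt set" where
  "open_wedge = {q. 0 < coord_w q \<and> 0 < side_pw q \<and> 0 < side_az q}"

lemma affine_fn_side_az: "affine_fn side_az" and affine_fn_side_pw: "affine_fn side_pw"
  unfolding side_az_def[abs_def] side_pw_def[abs_def]
  by (intro affine_fn_diff affine_fn_mult affine_fn_const affine_fn_coord_p affine_fn_coord_w)+

lemma side_az_a [simp]: "side_az a = 0" and side_az_z [simp]: "side_az z = 0"
  and side_az_b: "0 < side_az b" and side_pw_a [simp]: "side_pw a = 1"
  and side_pw_p [simp]: "side_pw p = 0" and side_pw_w [simp]: "side_pw w = 0"
proof -
  show "side_az z = 0"
    using tri_apw_sum_pos[OF z_in_tri_apw z_ne_a]
    unfolding side_az_def ray_param_def by (simp add: field_simps)
  show "0 < side_az b"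
    using ray_param_z_pos coord_p_b unfolding side_az_def by simp
qed (simp_all add: side_az_def side_pw_def)

lemma side_pw_c [simp]: "side_pw c = 0" and side_pw_d [simp]: "side_pw d = 0"
proof -
  have on_line: "side_pw e = 0" if pwe: "p \<in> open_segment w e" for e
  proof -
    obtain u where "0 < u" and p_eq: "(1 - u) *\<^sub>R w + u *\<^sub>R e = p"
      using pwe unfolding in_segment by auto
    have "side_pw p = (1 - u) * side_pw w + u * side_pw e"
      using affine_fn_segment[OF affine_fn_side_pw, of u w e] unfolding p_eq .
    then have "u * side_pw e = 0"
      by simp
    then show ?thesis
      using \<open>0 < u\<close> by simp
  qed
  have "p \<in> open_segment d c"
    using crossing(2) by (simp add: open_segment_commute)
  then have "side_pw c = 0 \<and> side_pw d = 0"
    using w(1) on_line crossing(2) side_pw_w by blast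
  then show "side_pw c = 0" "side_pw d = 0"
    by simp_all
qed

lemma wedge_subset_tri_apw: "wedge \<subseteq> tri_apw"
proof
  fix q assume q: "q \<in> wedge"
  then have "(1 - ray_param z) * coord_w q \<le> ray_param z * coord_p q"
    "0 \<le> (1 - ray_param z) * coord_w q"
    using ray_param_z_le_1 unfolding wedge_def side_az_def by auto
  then have "0 \<le> ray_param z * coord_p q"
    by linarith
  then have "0 \<le> coord_p q"
    using ray_param_z_pos by (simp add: zero_le_mult_iff)
  then show "q \<in> tri_apw"
    using q unfolding wedge_def tri_apw_def side_pw_def by auto
qed

lemma p_in_wedge: "p \<in> wedge"
  using ray_param_z_pos unfolding wedge_def side_az_def by simp

lemma ray_param_eq_imp_cross_eq_0:
  assumes "0 < coord_p x + coord_w x" "0 < coord_p y + coord_w y" "ray_param x = ray_param y"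
  shows "cross (x - a) (y - a) = 0"
proof -
  have "coord_w x * (coord_p y + coord_w y) = coord_w y * (coord_p x + coord_w x)"
    using assms unfolding ray_param_def by (simp add: field_simps)
  then have "coord_p x * coord_w y - coord_w x * coord_p y = 0"
    by (simp add: algebra_simps)
  then show ?thesis
    unfolding cross_coord_decomposition by simp
qed

lemma wedge_ray_param_le:
  assumes "q \<in> wedge" "q \<noteq> a"
  shows "ray_param q \<le> ray_param z"
proof -
  have "0 < coord_p q + coord_w q"
    using tri_apw_sum_pos assms wedge_subset_tri_apw by blast
  moreover have "coord_w q \<le> ray_param z * (coord_p q + coord_w q)"
    using assms(1) unfolding wedge_def side_az_def by (simp add: algebra_simps)
  ultimately show ?thesis
    unfolding ray_param_def by (simp add: divide_le_eq mult.commute)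
qed

lemma wedge_vertex_eq_z:
  assumes v: "v \<in> V" "v \<in> wedge" "v \<noteq> a" "\<forall>P\<in>S. v \<notin> poly_interior P"
  shows "v = z"
proof (rule ccontr)
  assume "v \<noteq> z"
  have "v \<in> tri_apw"
    using v(2) wedge_subset_tri_apw by blast
  then have "v \<in> candidates"
    using v unfolding candidates_def by blast
  then have "ray_param z = ray_param v"
    using z_min wedge_ray_param_le[OF v(2,3)] by (simp add: eq_iff)
  then have "cross (z - a) (v - a) = 0"
    using ray_param_eq_imp_cross_eq_0 tri_apw_sum_pos z_in_tri_apw z_ne_a \<open>v \<in> tri_apw\<close> v(3)
    by blast
  then show False
    using general_position_cross[OF gp vertices(1) z_vertex v(1) z_ne_a[symmetric] v(3)[symmetric]]
      \<open>v \<noteq> z\<close> by auto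
qed

lemma segment_a_z_subset_wedge: "closed_segment a z \<subseteq> wedge"
proof
  fix q assume "q \<in> closed_segment a z"
  then obtain u where u: "0 \<le> u" "u \<le> 1" "q = (1 - u) *\<^sub>R a + u *\<^sub>R z"
    unfolding in_segment by blast
  have "coord_w q = u * coord_w z" "side_az q = 0" "side_pw q = (1 - u) + u * side_pw z"
    using affine_fn_segment[OF affine_fn_coord_w, of u a z]
      affine_fn_segment[OF affine_fn_side_az, of u a z]
      affine_fn_segment[OF affine_fn_side_pw, of u a z] u(3) by simp_all
  moreover have "0 \<le> side_pw z"
    using z_in_tri_apw unfolding tri_apw_def side_pw_def by simp
  ultimately show "q \<in> wedge"
    unfolding wedge_def using u coord_w_z_pos by simp
qed

lemma sector_near_a_subset_wedge:
  obtains e where "e > 0" "sector a b z \<inter> ball a e \<subseteq> wedge"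
proof -
  define K where "K = norm (w - a) + norm (p - a)"
  define e where "e = \<bar>det_apw\<bar> / (2 * K + 1)"
  have "0 \<le> K" "0 < \<bar>det_apw\<bar>"
    unfolding K_def using det_apw_ne_0 by simp_all
  then have "e > 0"
    unfolding e_def by simp
  moreover have "sector a b z \<inter> ball a e \<subseteq> wedge"
  proof
    fix q assume q: "q \<in> sector a b z \<inter> ball a e"
    then obtain s t where st: "0 \<le> s" "0 \<le> t" "q = a + s *\<^sub>R (b - a) + t *\<^sub>R (z - a)"
      unfolding sector_def by auto
    have "coord_w q = t * coord_w z" "side_az q = s * side_az b"
      using affine_fn_combination[OF affine_fn_coord_w, of a s b t z]
        affine_fn_combination[OF affine_fn_side_az, of a s b t z] st(3) by simp_all
    then have "0 \<le> coord_w q" "0 \<le> side_az q"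
      using st coord_w_z_pos side_az_b by simp_all
    have "\<bar>cross (q - a) (w - a)\<bar> + \<bar>cross (p - a) (q - a)\<bar> \<le> 2 * norm (q - a) * K"
      using abs_cross_le[of "q - a" "w - a"] abs_cross_le[of "p - a" "q - a"]
      unfolding K_def by (simp add: algebra_simps)
    also have "\<dots> \<le> 2 * e * K"
      using q \<open>0 \<le> K\<close> by (intro mult_right_mono) (auto simp: dist_norm norm_minus_commute)
    also have "\<dots> < \<bar>det_apw\<bar>"
      using \<open>0 \<le> K\<close> \<open>0 < \<bar>det_apw\<bar>\<close> unfolding e_def by (simp add: field_simps)
    finally have "\<bar>coord_p q\<bar> + \<bar>coord_w q\<bar> < 1"
      unfolding coord_p_def coord_w_def using \<open>0 < \<bar>det_apw\<bar>\<close>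
      by (simp add: abs_divide add_divide_distrib[symmetric])
    then have "0 \<le> side_pw q"
      unfolding side_pw_def by linarith
    with \<open>0 \<le> coord_w q\<close> \<open>0 \<le> side_az q\<close> show "q \<in> wedge"
      unfolding wedge_def by simp
  qed
  ultimately show ?thesis
    using that by blast
qed

lemma convex_open_wedge: "convex open_wedge"
proof -
  have "open_wedge = {q. 0 < coord_w q} \<inter> {q. 0 < side_pw q} \<inter> {q. 0 < side_az q}"
    unfolding open_wedge_def by auto
  then show ?thesis
    by (simp add: convex_Int convex_affine_fn_pos affine_fn_coord_w affine_fn_side_pw
        affine_fn_side_az)
qed

lemma open_wedge_nonempty: "open_wedge \<noteq> {}"
proof -
  define m where "m = a + ((2 - ray_param z) / 3) *\<^sub>R (p - a) + (ray_param z / 3) *\<^sub>R (w - a)"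
  have m: "coord_p m = (2 - ray_param z) / 3" "coord_w m = ray_param z / 3"
    unfolding m_def
    using affine_fn_combination[OF affine_fn_coord_p] affine_fn_combination[OF affine_fn_coord_w]
    by simp_all
  have "side_pw m = 1 / 3" "side_az m = ray_param z / 3"
    unfolding side_pw_def side_az_def m by (simp_all add: field_simps)
  then have "m \<in> open_wedge"
    unfolding open_wedge_def using m ray_param_z_pos by simp
  then show ?thesis
    by blast
qed

lemma wedge_subset_closure_open_wedge: "wedge \<subseteq> closure open_wedge"
proof
  fix q assume q: "q \<in> wedge"
  obtain m where m: "m \<in> open_wedge"
    using open_wedge_nonempty by blast
  have "open_segment q m \<subseteq> open_wedge"
    using q m affine_fn_pos_open_segment[OF affine_fn_coord_w]
      affine_fn_pos_open_segment[OF affine_fn_side_pw]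
      affine_fn_pos_open_segment[OF affine_fn_side_az]
    unfolding wedge_def open_wedge_def by blast
  then have "closure (open_segment q m) \<subseteq> closure open_wedge"
    by (rule closure_mono)
  then show "q \<in> closure open_wedge"
    using m by (cases "q = m") (auto dest: closure_subset[THEN subsetD])
qed

lemma wedge_on_ab: "q \<in> wedge \<Longrightarrow> coord_w q = 0 \<Longrightarrow> q \<in> closed_segment a b"
proof -
  assume "q \<in> wedge" "coord_w q = 0"
  then have "0 \<le> coord_p q" "coord_p q \<le> 1"
    using wedge_subset_tri_apw unfolding tri_apw_def by auto
  moreover have "q = (1 - coord_p q) *\<^sub>R a + coord_p q *\<^sub>R p"
    using coord_decomposition[of q] \<open>coord_w q = 0\<close> by (simp add: algebra_simps)
  ultimately have "q \<in> closed_segment a p"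
    unfolding in_segment by blast
  moreover have "closed_segment a p \<subseteq> closed_segment a b"
    using crossing(1) by (simp add: subset_closed_segment open_closed_segment)
  ultimately show ?thesis
    by blast
qed

lemma wedge_on_cd: "q \<in> wedge \<Longrightarrow> side_pw q = 0 \<Longrightarrow> q \<in> closed_segment c d"
proof -
  assume "q \<in> wedge" "side_pw q = 0"
  then have "0 \<le> coord_w q" "coord_w q \<le> 1" "coord_p q = 1 - coord_w q"
    using wedge_subset_tri_apw unfolding tri_apw_def side_pw_def by auto
  moreover have "q = (1 - coord_w q) *\<^sub>R p + coord_w q *\<^sub>R w"
    using coord_decomposition[of q] \<open>coord_p q = 1 - coord_w q\<close> by (simp add: algebra_simps)
  ultimately have "q \<in> closed_segment p w"
    unfolding in_segment by blast
  moreover have "closed_segment p w \<subseteq> closed_segment c d"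
    using crossing(2) w(1) by (auto simp: subset_closed_segment open_closed_segment)
  ultimately show ?thesis
    by blast
qed

lemma obstacle_corner_in_wedge:
  assumes "P \<in> S" "v \<in> set P" "v \<in> wedge"
  shows "side_az v = 0"
proof (cases "v = a")
  case False
  have "v \<in> V"
    using obstacle_corners_subset[OF obstacles assms(1)] assms(2) by blast
  moreover have "\<forall>Q\<in>S. v \<notin> poly_interior Q"
    using obstacle_corner_notin_poly_interior[OF obstacles assms(1) _ assms(2)] by blast
  ultimately have "v = z"
    using wedge_vertex_eq_z assms(3) False by blast
  then show ?thesis
    by simp
qed simp

lemma wedge_point_on_open_edge:
  assumes P: "P \<in> S" "k < length P"
    and r: "r \<in> open_wedge" "r \<in> open_segment (P ! k) (P ! ((k + 1) mod length P))"
    and y: "y \<in> wedge" "y \<in> open_segment (P ! k) (P ! ((k + 1) mod length P))"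
  shows "0 < coord_w y" "0 < side_pw y"
proof -
  let ?c1 = "P ! k" and ?c2 = "P ! ((k + 1) mod length P)"
  have r': "r \<in> closed_segment ?c1 ?c2"
    using r(2) by (rule open_closed_segment)
  have "coord_w y \<noteq> 0"
  proof
    assume "coord_w y = 0"
    then have "{a, b} = {?c1, ?c2}"
      using wedge_on_ab[OF y(1)] visible_crossing_open_edge_is_edge[OF obstacles gp P vertices(1,2)
          visible(1) y(2)] by blast
    moreover have "coord_w x = 0" if "x \<in> {a, b}" for x
      using that by auto
    ultimately have "coord_w r = 0"
      using affine_fn_zero_on_segment[OF affine_fn_coord_w _ _ r'] by blast
    then show False
      using r(1) unfolding open_wedge_def by simp
  qed
  moreover have "side_pw y \<noteq> 0"
  proof
    assume "side_pw y = 0"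
    then have "{c, d} = {?c1, ?c2}"
      using wedge_on_cd[OF y(1)] visible_crossing_open_edge_is_edge[OF obstacles gp P vertices(3,4)
          visible(2) y(2)] by blast
    moreover have "side_pw x = 0" if "x \<in> {c, d}" for x
      using that by auto
    ultimately have "side_pw r = 0"
      using affine_fn_zero_on_segment[OF affine_fn_side_pw _ _ r'] by blast
    then show False
      using r(1) unfolding open_wedge_def by simp
  qed
  ultimately show "0 < coord_w y" "0 < side_pw y"
    using y(1) unfolding wedge_def by auto
qed

lemma obstacle_edge_end_beyond_az:
  assumes P: "P \<in> S" "k < length P"
    and r: "r \<in> open_wedge" "r \<in> open_segment (P ! k) (P ! ((k + 1) mod length P))"
    and v: "v \<in> {P ! k, P ! ((k + 1) mod length P)}"
  shows "side_az v \<le> 0"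
proof -
  let ?c1 = "P ! k" and ?c2 = "P ! ((k + 1) mod length P)"
  have "v \<noteq> r"
    using r(2) v by (auto simp: open_segment_def)
  \<comment> \<open>Walking from the corner \<open>v\<close> to \<open>r\<close>, the edge enters the wedge through the line \<open>az\<close>.\<close>
  then obtain y where y: "y \<in> closed_segment v r" "y \<noteq> r"
      "0 \<le> coord_w y" "0 \<le> side_pw y" "0 \<le> side_az y"
    and y_border: "y = v \<or> coord_w y = 0 \<or> side_pw y = 0 \<or> side_az y = 0"
    using affine_fns_segment_entry[OF affine_fn_coord_w affine_fn_side_pw affine_fn_side_az] r(1)
    unfolding open_wedge_def by blast
  then have "y \<in> wedge"
    unfolding wedge_def by simp
  have "side_az y = 0"
  proof (cases "y = v")
    case True
    have "0 < length P"
      using P(2) by linarith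
    then have "v \<in> set P"
      using v P(2) by auto
    then show ?thesis
      using obstacle_corner_in_wedge[OF P(1)] \<open>y \<in> wedge\<close> True by blast
  next
    case False
    have "r \<in> open_segment ?c2 ?c1"
      using r(2) by (simp add: open_segment_commute)
    then have "y \<in> open_segment v ?c2 \<or> y \<in> open_segment v ?c1"
      using v closed_segment_part_in_open_segment[OF _ y(1) False] r(2) by blast
    then have "y \<in> open_segment ?c1 ?c2"
      using v by (auto simp: open_segment_commute)
    then have "0 < coord_w y" "0 < side_pw y"
      using wedge_point_on_open_edge[OF P r] \<open>y \<in> wedge\<close> by auto
    then show ?thesis
      using y_border False by simp
  qed
  then show ?thesis
    using affine_fn_nonpos_before_zero[OF affine_fn_side_az y(1,2)] r(1)
    unfolding open_wedge_def by blast
qed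

lemma open_wedge_disjoint_obstacle_boundary:
  assumes P: "P \<in> S"
  shows "open_wedge \<inter> poly_boundary P = {}"
proof (rule ccontr)
  assume "open_wedge \<inter> poly_boundary P \<noteq> {}"
  then obtain r k where r: "r \<in> open_wedge" and k: "k < length P"
    and r_edge: "r \<in> closed_segment (P ! k) (P ! ((k + 1) mod length P))"
    unfolding poly_boundary_def poly_edge_def by blast
  have "0 < length P"
    using k by linarith
  then have "P ! k \<in> set P" "P ! ((k + 1) mod length P) \<in> set P"
    using k by simp_all
  moreover have "r \<in> wedge" "0 < side_az r"
    using r unfolding open_wedge_def wedge_def by auto
  moreover have "v \<noteq> r" if "v \<in> set P" "r \<in> wedge" "0 < side_az r" for v
    using obstacle_corner_in_wedge[OF P that(1)] that(2,3) by auto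
  ultimately have "P ! k \<noteq> r" "P ! ((k + 1) mod length P) \<noteq> r"
    by blast+
  then have r_open: "r \<in> open_segment (P ! k) (P ! ((k + 1) mod length P))"
    using r_edge unfolding open_segment_def by blast
  then have "side_az r \<le> max (side_az (P ! k)) (side_az (P ! ((k + 1) mod length P)))"
    using affine_fn_segment_between(2)[OF affine_fn_side_az open_closed_segment] by blast
  also have "\<dots> \<le> 0"
    using obstacle_edge_end_beyond_az[OF P k r r_open] by simp
  finally show False
    using \<open>0 < side_az r\<close> by simp
qed

lemma wedge_disjoint_obstacle_interior:
  assumes P: "P \<in> S"
  shows "wedge \<inter> poly_interior P = {}"
proof -
  have "open_wedge \<inter> poly_interior P = {}"
  proof (rule ccontr)
    assume "open_wedge \<inter> poly_interior P \<noteq> {}"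
    then have "open_wedge \<subseteq> poly_interior P"
      using connected_subset_inside[OF convex_connected[OF convex_open_wedge]
          open_wedge_disjoint_obstacle_boundary[OF P]]
      unfolding poly_interior_def by blast
    then have "p \<in> closure (inside (poly_boundary P))"
      using p_in_wedge wedge_subset_closure_open_wedge closure_mono
      unfolding poly_interior_def by blast
    then have "p \<in> poly_boundary P \<union> poly_interior P"
      using closure_inside_subset[OF closed_poly_boundary] unfolding poly_interior_def by blast
    moreover have "p \<notin> poly_interior P"
      using visible(1) P open_closed_segment[OF crossing(1)] unfolding visible_def by blast
    moreover have "p \<notin> poly_boundary P"
      using visible_crossing_notin_poly_boundary[OF obstacles gp P vertices crossing(3,1,2)]
        visible by blast
    ultimately show False
      by blast
  qed
  then have "poly_interior P \<inter> closure open_wedge = {}"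
    using open_Int_closure_eq_empty[OF open_poly_interior] by blast
  then show ?thesis
    using wedge_subset_closure_open_wedge by blast
qed

lemma exists_closer_vertex:
  "\<exists>v\<in>V. in_pcone a i v \<and> visible S a v \<and> \<not> separated S a b v \<and> proj a i v < proj a i b"
proof (intro bexI conjI)
  show "in_pcone a i z" "proj a i z < proj a i b"
    using in_pcone_tri_apw[OF z_in_tri_apw z_ne_a] proj_tri_apw_less[OF z_in_tri_apw] .
  show "visible S a z"
    unfolding visible_def using segment_a_z_subset_wedge wedge_disjoint_obstacle_interior by blast
  obtain e where "e > 0" "sector a b z \<inter> ball a e \<subseteq> wedge"
    by (rule sector_near_a_subset_wedge)
  then show "\<not> separated S a b z"
    unfolding separated_def using wedge_disjoint_obstacle_interior by blast
qed (rule z_vertex)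

end

lemma half_theta_choice_not_crossed:
  assumes os: "obstacle_setting V S" and gp: "general_position V"
    and choice: "half_theta_choice V S a b" and cd: "c \<in> V" "d \<in> V" "visible S c d"
    and crossing: "p \<in> open_segment a b" "p \<in> open_segment c d" "{a, b} \<noteq> {c, d}"
    and w: "w = c \<or> w = d" "w \<in> canon_tri a b"
  shows False
proof -
  obtain i where i: "i < 3" "in_pcone a i b" "visible S a b"
    and minimal: "\<forall>v\<in>V. in_pcone a i v \<longrightarrow> visible S a v \<longrightarrow> \<not> separated S a b v \<longrightarrow>
      proj a i b \<le> proj a i v"
    and ab: "a \<in> V" "b \<in> V"
    using choice unfolding half_theta_choice_def by blast
  interpret crossed_edge V S a b c d w p i
    using os gp ab cd i crossing w by unfold_locales
  show False
    using exists_closer_vertex minimal by fastforce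
qed

lemma half_theta_choices_not_crossing:
  assumes os: "obstacle_setting V S" and gp: "general_position V"
    and choices: "half_theta_choice V S a b" "half_theta_choice V S c d" and ends: "{a, b} \<noteq> {c, d}"
  shows "open_segment a b \<inter> open_segment c d = {}"
proof (rule ccontr)
  assume "open_segment a b \<inter> open_segment c d \<noteq> {}"
  then obtain p where p: "p \<in> open_segment a b" "p \<in> open_segment c d"
    by blast
  have V: "a \<in> V" "b \<in> V" "c \<in> V" "d \<in> V" and vis: "visible S a b" "visible S c d"
    using choices unfolding half_theta_choice_def by auto
  have "c \<in> canon_tri a b \<or> d \<in> canon_tri a b \<or> a \<in> canon_tri c d \<or> b \<in> canon_tri c d"
    using crossing_segments_canon_tri[OF open_closed_segment open_closed_segment] p by blast
  then show False
    using half_theta_choice_not_crossed[OF os gp choices(1) V(3,4) vis(2) p ends]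
      half_theta_choice_not_crossed[OF os gp choices(2) V(1,2) vis(1) p(2,1) ends[symmetric]]
    by blast
qed

lemma G_inf_edge_oriented:
  assumes "G_inf_edge V S a b"
  obtains a' b' where "half_theta_choice V S a' b'" "{a', b'} = {a, b}"
    "open_segment a' b' = open_segment a b"
  using assms unfolding G_inf_edge_def by (metis insert_commute open_segment_commute)

theorem lemma2:
  fixes V :: "pt set" and S :: "pt list set"
  assumes "obstacle_setting V S"
    and "general_position V"
  shows "plane_graph (G_inf_edge V S)"
  unfolding plane_graph_def
proof (intro allI impI)
  fix a b c d
  assume ab: "G_inf_edge V S a b" and cd: "G_inf_edge V S c d" and ends: "{a, b} \<noteq> {c, d}"
  obtain a' b' where a'b': "half_theta_choice V S a' b'" "{a', b'} = {a, b}"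
      "open_segment a' b' = open_segment a b"
    using ab by (rule G_inf_edge_oriented)
  obtain c' d' where c'd': "half_theta_choice V S c' d'" "{c', d'} = {c, d}"
      "open_segment c' d' = open_segment c d"
    using cd by (rule G_inf_edge_oriented)
  show "open_segment a b \<inter> open_segment c d = {}"
    using half_theta_choices_not_crossing[OF assms a'b'(1) c'd'(1)] a'b' c'd' ends by simp
qed

end
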